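(* For every $\varepsilon>0$, the Pruned Plurality Veto rule with parameter $\varepsilon$ has metric distortion at most $9+\varepsilon$ and utilitarian distortion at most $\frac{(6+\varepsilon)m^2}{\varepsilon}=O(m^2/\varepsilon)$.
   Context: Setting: $\mathcal N$ is a set of $n$ agents and $\mathcal A$ a set of $m$ alternatives; each agent $i$ has a strict ranking $\sigma_i$ of $\mathcal A$, $X\succ_i Y$ meaning $i$ ranks $X$ above $Y$; the plurality score $\mathrm{plu}(X,\vec\sigma)$ is the number of agents ranking $X$ first. Metric framework: a pseudometric $d$ on $\mathcal N\cup\mathcal A$ is consistent with $\vec\sigma$ if $X\succ_iY\Rightarrow d(i,X)\le d(i,Y)$; $\mathrm{SC}(X,d)=\sum_i d(i,X)$; metric distortion of a rule $f$ is $\sup_{\vec\sigma}\sup_{d\text{ consistent}}\mathbb E_{X\sim f(\vec\sigma)}[\mathrm{SC}(X,d)]/\min_X\mathrm{SC}(X,d)$. Utilitarian framework: $u_i:\mathcal A\to\mathbb R_{\ge0}$ with $\sum_X u_i(X)=1$, consistent with $\vec\sigma$ if $X\succ_iY\Rightarrow u_i(X)\ge u_i(Y)$; $\mathrm{SW}(X,\vec u)=\sum_iu_i(X)$; utilitarian distortion of $f$ is $\sup_{\vec\sigma}\sup_{\vec u\text{ consistent}}\max_X\mathrm{SW}(X,\vec u)/\mathbb E_{X\sim f(\vec\sigma)}[\mathrm{SW}(X,\vec u)]$. Plurality Veto: initialize $\mathrm{score}(X)=\mathrm{plu}(X,\vec\sigma)$; let $S$ be the alternatives with positive score; process agents in a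 fixed order, each agent decrementing the score of her lowest-ranked alternative in $S$ and removing it from $S$ if its score hits $0$; output the last alternative removed. (Plurality Veto is known to have metric distortion $3$.) Pruned Plurality Veto with parameter $\varepsilon>0$: compute $\mathcal A'=\{X:\mathrm{plu}(X,\vec\sigma)\ge \frac{\varepsilon n}{(6+\varepsilon)m}\}$ (nonempty), restrict every ranking to $\mathcal A'$, and output the result of Plurality Veto on the restricted profile. *)

theory Defs
  imports Complex_Main
begin

text \<open>A profile over the alternative set A is a nonempty list of rankings
  (agent i is the i-th list element, so the list order is the fixed processing
  order of Plurality Veto); each ranking is a list of all alternatives without
  repetition, most preferred first.\<close>

definition valid_profile :: "'a set \<Rightarrow> 'a list list \<Rightarrow> bool" where
  "valid_profile A P \<longleftrightarrow> finite A \<and> A \<noteq> {} \<and> P \<noteq> [] \<and>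
     (\<forall>r\<in>set P. distinct r \<and> set r = A)"

definition prefers :: "'a list list \<Rightarrow> nat \<Rightarrow> 'a \<Rightarrow> 'a \<Rightarrow> bool" where
  "prefers P i X Y \<longleftrightarrow> (\<exists>j k. j < k \<and> k < length (P ! i) \<and> P ! i ! j = X \<and> P ! i ! k = Y)"

definition plu :: "'a \<Rightarrow> 'a list list \<Rightarrow> nat" where
  "plu X P = length (filter (\<lambda>r. r \<noteq> [] \<and> hd r = X) P)"

definition pv_step :: "('a \<Rightarrow> nat) \<times> 'a set \<times> 'a option \<Rightarrow> 'a list \<Rightarrow> ('a \<Rightarrow> nat) \<times> 'a set \<times> 'a option" where
  "pv_step st r = (case st of (sc, S, lst) \<Rightarrow>
     (let Y = last (filter (\<lambda>x. x \<in> S) r); sc' = sc(Y := sc Y - 1) in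
      if sc' Y = 0 then (sc', S - {Y}, Some Y) else (sc', S, lst)))"

definition plurality_veto :: "'a set \<Rightarrow> 'a list list \<Rightarrow> 'a" where
  "plurality_veto A P =
     the (snd (snd (foldl pv_step
        ((\<lambda>X. plu X P), {X \<in> A. plu X P > 0}, None) P)))"

definition pruned_set :: "real \<Rightarrow> 'a set \<Rightarrow> 'a list list \<Rightarrow> 'a set" where
  "pruned_set \<epsilon> A P = {X \<in> A. real (plu X P) \<ge>
      \<epsilon> * real (length P) / ((6 + \<epsilon>) * real (card A))}"

definition pruned_plurality_veto :: "real \<Rightarrow> 'a set \<Rightarrow> 'a list list \<Rightarrow> 'a" where
  "pruned_plurality_veto \<epsilon> A P =
     (let A' = pruned_set \<epsilon> A P in plurality_veto A' (map (filter (\<lambda>x. x \<in> A')) P))"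

text \<open>Metric framework. Points: alternatives are Inl X, agents are Inr i.\<close>

definition points :: "'a set \<Rightarrow> 'a list list \<Rightarrow> ('a + nat) set" where
  "points A P = Inl ` A \<union> Inr ` {..<length P}"

definition pseudometric_on :: "'b set \<Rightarrow> ('b \<Rightarrow> 'b \<Rightarrow> real) \<Rightarrow> bool" where
  "pseudometric_on U d \<longleftrightarrow>
     (\<forall>x\<in>U. d x x = 0) \<and> (\<forall>x\<in>U. \<forall>y\<in>U. d x y \<ge> 0 \<and> d x y = d y x) \<and>
     (\<forall>x\<in>U. \<forall>y\<in>U. \<forall>z\<in>U. d x z \<le> d x y + d y z)"

definition metric_consistent :: "'a set \<Rightarrow> 'a list list \<Rightarrow> ('a + nat \<Rightarrow> 'a + nat \<Rightarrow> real) \<Rightarrow> bool" where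
  "metric_consistent A P d \<longleftrightarrow> pseudometric_on (points A P) d \<and>
     (\<forall>i<length P. \<forall>X\<in>A. \<forall>Y\<in>A. prefers P i X Y \<longrightarrow> d (Inr i) (Inl X) \<le> d (Inr i) (Inl Y))"

definition SC :: "'a list list \<Rightarrow> ('a + nat \<Rightarrow> 'a + nat \<Rightarrow> real) \<Rightarrow> 'a \<Rightarrow> real" where
  "SC P d X = (\<Sum>i<length P. d (Inr i) (Inl X))"

definition metric_distortion_at_most :: "('a set \<Rightarrow> 'a list list \<Rightarrow> 'a) \<Rightarrow> real \<Rightarrow> bool" where
  "metric_distortion_at_most f c \<longleftrightarrow>
     (\<forall>A P d. valid_profile A P \<longrightarrow> metric_consistent A P d \<longrightarrow>
        (\<forall>X\<in>A. SC P d (f A P) \<le> c * SC P d X))"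

definition util_consistent :: "'a set \<Rightarrow> 'a list list \<Rightarrow> (nat \<Rightarrow> 'a \<Rightarrow> real) \<Rightarrow> bool" where
  "util_consistent A P u \<longleftrightarrow>
     (\<forall>i<length P. (\<forall>X\<in>A. u i X \<ge> 0) \<and> (\<Sum>X\<in>A. u i X) = 1 \<and>
        (\<forall>X\<in>A. \<forall>Y\<in>A. prefers P i X Y \<longrightarrow> u i X \<ge> u i Y))"

definition SW :: "'a list list \<Rightarrow> (nat \<Rightarrow> 'a \<Rightarrow> real) \<Rightarrow> 'a \<Rightarrow> real" where
  "SW P u X = (\<Sum>i<length P. u i X)"

definition util_distortion_at_most :: "('a set \<Rightarrow> 'a list list \<Rightarrow> 'a) \<Rightarrow> (nat \<Rightarrow> real) \<Rightarrow> bool" where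
  "util_distortion_at_most f c \<longleftrightarrow>
     (\<forall>A P u. valid_profile A P \<longrightarrow> util_consistent A P u \<longrightarrow>
        (\<forall>X\<in>A. SW P u X \<le> c (card A) * SW P u (f A P)))"

end

theory Submission
  imports Defs
begin

text \<open>Plurality Veto keeps the following invariant: its winner W comes with one vetoed alternative
  y_i per agent i such that i ranks W weakly above y_i, and the y_i form, as a multiset, exactly
  the agents' first choices. Run on the pruned set A', the triangle inequality gives
  SC(W) \<le> SC(X) + \<Sum>_j d(X, t_j), where t_j is agent j's favourite in A'. If j's overall favourite
  survived pruning, then d(X, t_j) \<le> 2 d(j, X); otherwise d(X, t_j) \<le> 2 d(j, X) + \<delta>, where \<delta> is
  the distance from X to the nearest alternative of A'; the first case also gives \<delta> \<le> 2 d(j, X),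
  so if k agents are of the second kind then (n - k) \<delta> \<le> 2 SC(X). Pruning deletes only
  alternatives with fewer than \<epsilon>n/((6+\<epsilon>)m) first places, so k \<le> \<epsilon>n/(6+\<epsilon>), whence SC(W) \<le> (3 + \<epsilon>/3) SC(X).
  For utilities, W survived pruning, so at least \<epsilon>n/((6+\<epsilon>)m) agents rank it first and each of
  them gives it utility at least 1/m, while no alternative has welfare above n.\<close>

primrec ranked_above :: "'a list \<Rightarrow> 'a \<Rightarrow> 'a \<Rightarrow> bool" where
  "ranked_above [] x y \<longleftrightarrow> False"
| "ranked_above (z # r) x y \<longleftrightarrow> x = z \<and> y \<in> set r \<or> ranked_above r x y"

lemma ranked_above_set: "ranked_above r x y \<Longrightarrow> x \<in> set r \<and> y \<in> set r"
  by (induction r) auto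

lemma ranked_above_iff_nth:
  "ranked_above r x y \<longleftrightarrow> (\<exists>j k. j < k \<and> k < length r \<and> r ! j = x \<and> r ! k = y)"
proof (induction r)
  case (Cons z r)
  show ?case
  proof
    assume "ranked_above (z # r) x y"
    then consider "x = z" "y \<in> set r" | "ranked_above r x y" by auto
    then show "\<exists>j k. j < k \<and> k < length (z # r) \<and> (z # r) ! j = x \<and> (z # r) ! k = y"
    proof cases
      case 1
      then obtain k where "k < length r" "r ! k = y" by (meson in_set_conv_nth)
      with 1 show ?thesis by (intro exI[of _ 0] exI[of _ "Suc k"]) auto
    next
      case 2
      then obtain j k where "j < k" "k < length r" "r ! j = x" "r ! k = y" using Cons.IH by blast
      then show ?thesis by (intro exI[of _ "Suc j"] exI[of _ "Suc k"]) auto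
    qed
  next
    assume "\<exists>j k. j < k \<and> k < length (z # r) \<and> (z # r) ! j = x \<and> (z # r) ! k = y"
    then obtain j k where jk: "j < k" "k < length (z # r)" "(z # r) ! j = x" "(z # r) ! k = y"
      by blast
    then obtain k' where k': "k = Suc k'" by (cases k) auto
    show "ranked_above (z # r) x y"
    proof (cases j)
      case 0
      then show ?thesis using jk k' by auto
    next
      case (Suc j')
      then have "ranked_above r x y" using Cons.IH jk k' by auto
      then show ?thesis by simp
    qed
  qed
qed simp

lemma prefers_iff_ranked_above: "prefers P i x y \<longleftrightarrow> ranked_above (P ! i) x y"
  by (simp add: prefers_def ranked_above_iff_nth)

lemma ranked_above_filter: "ranked_above (filter Q r) x y \<Longrightarrow> ranked_above r x y"
  by (induction r) (auto split: if_splits)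

lemma ranked_above_hd: "r \<noteq> [] \<Longrightarrow> y \<in> set r \<Longrightarrow> y \<noteq> hd r \<Longrightarrow> ranked_above r (hd r) y"
  by (cases r) auto

lemma ranked_above_last_filter:
  assumes "x \<in> set r" "Q x" "x \<noteq> last (filter Q r)"
  shows "ranked_above r x (last (filter Q r))"
  using assms
proof (induction r)
  case (Cons z r)
  show ?case
  proof (cases "filter Q r = []")
    case True
    then show ?thesis using Cons.prems by (auto simp: filter_empty_conv)
  next
    case False
    then have "last (filter Q r) \<in> set r" using last_in_set by fastforce
    with False show ?thesis using Cons by (auto split: if_splits)
  qed
qed simp

lemma sum_plu_mult_eq_sum_tops:
  assumes "finite B" "\<forall>r\<in>set Q. r \<noteq> [] \<and> hd r \<in> B"
  shows "(\<Sum>Y\<in>B. real (plu Y Q) * f Y) = (\<Sum>j<length Q. f (hd (Q ! j)))"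
proof -
  have "(\<Sum>Y\<in>B. real (plu Y Q) * f Y) = (\<Sum>r\<leftarrow>Q. f (hd r))"
    using assms(2)
  proof (induction Q)
    case (Cons r Q)
    have "(\<Sum>Y\<in>B. real (plu Y (r # Q)) * f Y)
        = (\<Sum>Y\<in>B. of_bool (hd r = Y) * f Y) + (\<Sum>Y\<in>B. real (plu Y Q) * f Y)"
      using Cons.prems by (simp add: plu_def sum.distrib[symmetric] algebra_simps)
        (rule sum.cong, auto simp: algebra_simps)
    also have "(\<Sum>Y\<in>B. of_bool (hd r = Y) * f Y) = f (hd r)"
    proof -
      have "B \<inter> {Y. hd r = Y} = {hd r}" using Cons.prems by auto
      then show ?thesis using assms(1) by (simp add: sum_of_bool_mult_eq)
    qed
    finally show ?case using Cons by simp
  qed (simp add: plu_def)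
  also have "\<dots> = (\<Sum>j<length Q. f (hd (Q ! j)))"
    by (simp add: sum_list_sum_nth atLeast0LessThan)
  finally show ?thesis .
qed

lemma sum_mult_fun_upd_decrement:
  assumes "finite B" "Y \<in> B" "0 < sc Y"
  shows "(\<Sum>X\<in>B. real (sc X) * f X) = f Y + (\<Sum>X\<in>B. real ((sc(Y := sc Y - 1)) X) * f X)"
  using assms by (simp add: sum.remove of_nat_diff algebra_simps)

lemma pv_step_eq:
  assumes "set r = B" "{X\<in>B. 0 < sc X} \<noteq> {}"
  defines "S \<equiv> {X\<in>B. 0 < sc X}"
  defines "Y \<equiv> last (filter (\<lambda>x. x \<in> S) r)"
  shows "Y \<in> B" "0 < sc Y"
    "pv_step (sc, S, lst) r =
       (sc(Y := sc Y - 1), {X\<in>B. 0 < (sc(Y := sc Y - 1)) X}, if sc Y = 1 then Some Y else lst)"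
proof -
  have "filter (\<lambda>x. x \<in> S) r \<noteq> []"
    using assms(1,2) by (auto simp: filter_empty_conv S_def)
  then have "Y \<in> S"
    unfolding Y_def using last_in_set by fastforce
  then show "Y \<in> B" "0 < sc Y" by (auto simp: S_def)
  then show "pv_step (sc, S, lst) r =
      (sc(Y := sc Y - 1), {X\<in>B. 0 < (sc(Y := sc Y - 1)) X}, if sc Y = 1 then Some Y else lst)"
    unfolding pv_step_def Let_def by (simp flip: Y_def) (auto simp: S_def)
qed

text \<open>The list ys records each agent's veto; as a multiset it equals the scores sc, which
  start out as the plurality scores.\<close>

lemma foldl_pv_step_veto_matching:
  assumes "finite B"
  shows "\<lbrakk>rs \<noteq> []; \<forall>r\<in>set rs. set r = B; (\<Sum>X\<in>B. sc X) = length rs\<rbrakk> \<Longrightarrow>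
    \<exists>W ys. snd (snd (foldl pv_step (sc, {X\<in>B. 0 < sc X}, lst) rs)) = Some W \<and>
      W \<in> B \<and> 0 < sc W \<and> length ys = length rs \<and> set ys \<subseteq> B \<and>
      (\<forall>k<length rs. W = ys ! k \<or> ranked_above (rs ! k) W (ys ! k)) \<and>
      (\<forall>f. (\<Sum>y\<leftarrow>ys. f y) = (\<Sum>X\<in>B. real (sc X) * f X))"
proof (induction rs arbitrary: sc lst)
  case (Cons r rest)
  define Y where "Y = last (filter (\<lambda>x. x \<in> {X\<in>B. 0 < sc X}) r)"
  define sc' where "sc' = sc(Y := sc Y - 1)"
  have "{X\<in>B. 0 < sc X} \<noteq> {}"
    using Cons.prems(3) by (auto intro: ccontr)
  note step = pv_step_eq[OF _ this, of r, folded Y_def sc'_def]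
  have YB: "Y \<in> B" and scY: "0 < sc Y" using step Cons.prems(2) by auto
  have count: "(\<Sum>X\<in>B. sc' X) = length rest"
    using Cons.prems(3) YB scY assms by (simp add: sc'_def sum.remove)
  have weights: "(\<Sum>X\<in>B. real (sc X) * f X) = f Y + (\<Sum>X\<in>B. real (sc' X) * f X)" for f
    unfolding sc'_def using assms YB scY by (rule sum_mult_fun_upd_decrement)
  show ?case
  proof (cases "rest = []")
    case True
    then have "\<forall>X\<in>B. sc' X = 0" using count assms by simp
    then have "sc Y = 1" "\<forall>X\<in>B. real (sc' X) = 0" using YB scY by (auto simp: sc'_def)
    then show ?thesis
      using True step(3) Cons.prems(2) weights YB scY by (intro exI[of _ Y] exI[of _ "[Y]"]) auto
  next
    case False
    have "\<forall>r'\<in>set rest. set r' = B" using Cons.prems(2) by simp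
    from Cons.IH[OF False this count, where lst = "if sc Y = 1 then Some Y else lst"]
    obtain W ys where W: "snd (snd (foldl pv_step (pv_step (sc, {X\<in>B. 0 < sc X}, lst) r) rest)) = Some W"
        "W \<in> B" "0 < sc' W" "length ys = length rest" "set ys \<subseteq> B"
        "\<forall>k<length rest. W = ys ! k \<or> ranked_above (rest ! k) W (ys ! k)"
        "\<forall>f. (\<Sum>y\<leftarrow>ys. f y) = (\<Sum>X\<in>B. real (sc' X) * f X)"
      unfolding step(3)[OF Cons.prems(2)[rule_format, OF list.set_intros(1)]] by blast
    have "0 < sc W" using W(3) by (auto simp: sc'_def split: if_splits)
    moreover have "W = Y \<or> ranked_above r W Y"
      using ranked_above_last_filter[of W r "\<lambda>x. x \<in> {X\<in>B. 0 < sc X}"] W(2) \<open>0 < sc W\<close>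
        Cons.prems(2) unfolding Y_def by auto
    ultimately show ?thesis
      using W YB weights
      by (intro exI[of _ W] exI[of _ "Y # ys"]) (auto simp: nth_Cons split: nat.split)
  qed
qed simp

definition restrict_profile :: "'a set \<Rightarrow> 'a list list \<Rightarrow> 'a list list" where
  "restrict_profile B P = map (filter (\<lambda>x. x \<in> B)) P"

lemma pruned_plurality_veto_eq:
  "pruned_plurality_veto \<epsilon> A P =
     plurality_veto (pruned_set \<epsilon> A P) (restrict_profile (pruned_set \<epsilon> A P) P)"
  by (simp add: pruned_plurality_veto_def restrict_profile_def Let_def)

locale profile =
  fixes A :: "'a set" and P :: "'a list list"
  assumes valid: "valid_profile A P"
begin

lemma finite_alternatives: "finite A"
  and alternatives_nonempty: "A \<noteq> {}"
  and agents_nonempty: "P \<noteq> []"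
  using valid by (auto simp: valid_profile_def)

lemma set_ranking: "i < length P \<Longrightarrow> set (P ! i) = A"
  using valid by (auto simp: valid_profile_def)

lemma ranking_nonempty: "i < length P \<Longrightarrow> P ! i \<noteq> []"
  using set_ranking alternatives_nonempty by fastforce

lemma restricted_top_in:
  assumes "i < length P" "B \<subseteq> A" "B \<noteq> {}"
  shows "filter (\<lambda>x. x \<in> B) (P ! i) \<noteq> []" "hd (filter (\<lambda>x. x \<in> B) (P ! i)) \<in> B"
proof -
  show ne: "filter (\<lambda>x. x \<in> B) (P ! i) \<noteq> []"
    using assms set_ranking by (auto simp: filter_empty_conv)
  show "hd (filter (\<lambda>x. x \<in> B) (P ! i)) \<in> B"
    using hd_in_set[OF ne] by simp
qed

lemma top_in: "i < length P \<Longrightarrow> hd (P ! i) \<in> A"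
  using restricted_top_in[of i A] alternatives_nonempty set_ranking by (simp add: filter_id_conv)

lemma ranked_above_restricted_top:
  assumes "i < length P" "B \<subseteq> A" "Y \<in> B" "Y \<noteq> hd (filter (\<lambda>x. x \<in> B) (P ! i))"
  shows "ranked_above (P ! i) (hd (filter (\<lambda>x. x \<in> B) (P ! i))) Y"
proof -
  have "ranked_above (filter (\<lambda>x. x \<in> B) (P ! i)) (hd (filter (\<lambda>x. x \<in> B) (P ! i))) Y"
    using assms restricted_top_in[of i B] set_ranking by (intro ranked_above_hd) auto
  then show ?thesis by (rule ranked_above_filter)
qed

lemma restricted_top_eq_top: "i < length P \<Longrightarrow> hd (P ! i) \<in> B \<Longrightarrow> hd (filter (\<lambda>x. x \<in> B) (P ! i)) = hd (P ! i)"
  using set_ranking alternatives_nonempty by (cases "P ! i") auto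

lemma sum_plu_mult: "(\<Sum>Y\<in>A. real (plu Y P) * f Y) = (\<Sum>j<length P. f (hd (P ! j)))"
  using finite_alternatives top_in ranking_nonempty
  by (intro sum_plu_mult_eq_sum_tops) (auto simp: in_set_conv_nth)

lemma sum_plu: "(\<Sum>Y\<in>A. plu Y P) = length P"
  using sum_plu_mult[of "\<lambda>_. 1"] by (simp flip: of_nat_sum)

lemma profile_restrict:
  assumes "B \<subseteq> A" "B \<noteq> {}"
  shows "profile B (restrict_profile B P)"
  using valid assms finite_subset by (auto simp: profile_def valid_profile_def restrict_profile_def)

lemma plurality_veto_veto_matching:
  "\<exists>ys. plurality_veto A P \<in> A \<and> length ys = length P \<and> set ys \<subseteq> A \<and>
     (\<forall>i<length P. plurality_veto A P = ys ! i \<or> ranked_above (P ! i) (plurality_veto A P) (ys ! i)) \<and>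
     (\<forall>f :: 'a \<Rightarrow> real. (\<Sum>y\<leftarrow>ys. f y) = (\<Sum>j<length P. f (hd (P ! j))))"
proof -
  have "\<forall>r\<in>set P. set r = A" using valid by (simp add: valid_profile_def)
  from foldl_pv_step_veto_matching[OF finite_alternatives agents_nonempty this sum_plu, where lst = None]
  obtain W ys where W: "snd (snd (foldl pv_step (\<lambda>X. plu X P, {X\<in>A. 0 < plu X P}, None) P)) = Some W"
    "W \<in> A" "length ys = length P" "set ys \<subseteq> A"
    "\<forall>i<length P. W = ys ! i \<or> ranked_above (P ! i) W (ys ! i)"
    and sums: "\<forall>f. (\<Sum>y\<leftarrow>ys. f y) = (\<Sum>X\<in>A. real (plu X P) * f X)"
    by blast
  have "(\<Sum>y\<leftarrow>ys. f y) = (\<Sum>j<length P. f (hd (P ! j)))" for f :: "'a \<Rightarrow> real"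
    using sums sum_plu_mult by simp
  moreover have "plurality_veto A P = W" using W(1) by (simp add: plurality_veto_def)
  ultimately show ?thesis using W(2-5) by blast
qed

lemma plurality_veto_restrict_veto_matching:
  assumes "B \<subseteq> A" "B \<noteq> {}"
  defines "W \<equiv> plurality_veto B (restrict_profile B P)"
  shows "\<exists>ys. W \<in> B \<and> length ys = length P \<and> set ys \<subseteq> B \<and>
     (\<forall>i<length P. W = ys ! i \<or> ranked_above (P ! i) W (ys ! i)) \<and>
     (\<forall>f :: 'a \<Rightarrow> real. (\<Sum>y\<leftarrow>ys. f y) = (\<Sum>j<length P. f (hd (filter (\<lambda>x. x \<in> B) (P ! j)))))"
  using profile.plurality_veto_veto_matching[OF profile_restrict[OF assms(1,2)]]
  unfolding W_def by (auto simp: restrict_profile_def intro: ranked_above_filter)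

lemma sum_pruned_tops_le:
  assumes "0 \<le> \<epsilon>"
  shows "(6 + \<epsilon>) * (\<Sum>j<length P. of_bool (hd (P ! j) \<notin> pruned_set \<epsilon> A P))
    \<le> \<epsilon> * real (length P)"
proof -
  define thr where "thr = \<epsilon> * real (length P) / ((6 + \<epsilon>) * real (card A))"
  have "(\<Sum>j<length P. of_bool (hd (P ! j) \<notin> pruned_set \<epsilon> A P))
      = (\<Sum>Y\<in>A. real (plu Y P) * of_bool (Y \<notin> pruned_set \<epsilon> A P))"
    by (simp add: sum_plu_mult)
  also have "\<dots> \<le> (\<Sum>Y\<in>A. thr)"
    using assms by (intro sum_mono) (auto simp: pruned_set_def thr_def)
  also have "\<dots> = \<epsilon> * real (length P) / (6 + \<epsilon>)"
    using finite_alternatives alternatives_nonempty by (simp add: thr_def)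
  finally show ?thesis using assms by (simp add: field_simps)
qed

lemma pruned_set_nonempty: "0 \<le> \<epsilon> \<Longrightarrow> pruned_set \<epsilon> A P \<noteq> {}"
  using sum_pruned_tops_le[of \<epsilon>] agents_nonempty by auto

lemma pruned_plurality_veto_in: "0 \<le> \<epsilon> \<Longrightarrow> pruned_plurality_veto \<epsilon> A P \<in> pruned_set \<epsilon> A P"
  using plurality_veto_restrict_veto_matching[of "pruned_set \<epsilon> A P"] pruned_set_nonempty
  unfolding pruned_plurality_veto_eq by (auto simp: pruned_set_def)

end

locale metric_profile = profile +
  fixes d :: "'a + nat \<Rightarrow> 'a + nat \<Rightarrow> real"
  assumes consistent: "metric_consistent A P d"
begin

lemma pseudometric: "pseudometric_on (points A P) d"
  using consistent by (simp add: metric_consistent_def)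

lemma dist_agent_nonneg: "i < length P \<Longrightarrow> X \<in> A \<Longrightarrow> 0 \<le> d (Inr i) (Inl X)"
  and dist_alternatives_nonneg: "X \<in> A \<Longrightarrow> Y \<in> A \<Longrightarrow> 0 \<le> d (Inl X) (Inl Y)"
  using pseudometric by (auto simp: pseudometric_on_def points_def)

lemma dist_agent_triangle:
  "i < length P \<Longrightarrow> X \<in> A \<Longrightarrow> Y \<in> A \<Longrightarrow> d (Inr i) (Inl Y) \<le> d (Inr i) (Inl X) + d (Inl X) (Inl Y)"
  using pseudometric unfolding pseudometric_on_def points_def by blast

lemma dist_alternatives_le:
  assumes "i < length P" "X \<in> A" "Y \<in> A"
  shows "d (Inl X) (Inl Y) \<le> d (Inr i) (Inl X) + d (Inr i) (Inl Y)"
proof -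
  have "d (Inl X) (Inl Y) \<le> d (Inl X) (Inr i) + d (Inr i) (Inl Y)"
    using pseudometric assms unfolding pseudometric_on_def points_def by blast
  moreover have "d (Inl X) (Inr i) = d (Inr i) (Inl X)"
    using pseudometric assms unfolding pseudometric_on_def points_def by blast
  ultimately show ?thesis by simp
qed

lemma dist_ranked_above:
  assumes "i < length P" "ranked_above (P ! i) X Y"
  shows "d (Inr i) (Inl X) \<le> d (Inr i) (Inl Y)"
proof -
  have "X \<in> A" "Y \<in> A"
    using ranked_above_set[OF assms(2)] set_ranking[OF assms(1)] by auto
  then show ?thesis
    using consistent assms by (auto simp: metric_consistent_def prefers_iff_ranked_above)
qed

lemma dist_restricted_top_le:
  assumes "i < length P" "B \<subseteq> A" "Y \<in> B"
  shows "d (Inr i) (Inl (hd (filter (\<lambda>x. x \<in> B) (P ! i)))) \<le> d (Inr i) (Inl Y)"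
  using assms dist_ranked_above ranked_above_restricted_top
  by (cases "Y = hd (filter (\<lambda>x. x \<in> B) (P ! i))") auto

lemma SC_nonneg: "X \<in> A \<Longrightarrow> 0 \<le> SC P d X"
  unfolding SC_def using dist_agent_nonneg by (intro sum_nonneg) simp

lemma dist_top_le: "i < length P \<Longrightarrow> Y \<in> A \<Longrightarrow> d (Inr i) (Inl (hd (P ! i))) \<le> d (Inr i) (Inl Y)"
  using dist_restricted_top_le[of i A Y] set_ranking by simp

lemma SC_plurality_veto_restrict_le:
  assumes "B \<subseteq> A" "B \<noteq> {}" "X \<in> A"
  shows "SC P d (plurality_veto B (restrict_profile B P))
    \<le> SC P d X + (\<Sum>j<length P. d (Inl X) (Inl (hd (filter (\<lambda>x. x \<in> B) (P ! j)))))"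
proof -
  define W where "W = plurality_veto B (restrict_profile B P)"
  obtain ys where ys: "length ys = length P" "set ys \<subseteq> B"
    "\<forall>i<length P. W = ys ! i \<or> ranked_above (P ! i) W (ys ! i)"
    "\<forall>f :: 'a \<Rightarrow> real. (\<Sum>y\<leftarrow>ys. f y) = (\<Sum>j<length P. f (hd (filter (\<lambda>x. x \<in> B) (P ! j))))"
    using plurality_veto_restrict_veto_matching[OF assms(1,2), folded W_def] by blast
  have "SC P d W \<le> (\<Sum>i<length P. d (Inr i) (Inl X) + d (Inl X) (Inl (ys ! i)))"
    unfolding SC_def
  proof (rule sum_mono)
    fix i assume "i \<in> {..<length P}"
    then have i: "i < length P" by simp
    have "ys ! i \<in> set ys" using ys(1) i by simp
    then have "ys ! i \<in> A" using ys(2) assms(1) by blast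
    have "d (Inr i) (Inl W) \<le> d (Inr i) (Inl (ys ! i))"
      using ys(3) i dist_ranked_above[of i W "ys ! i"] by auto
    also have "\<dots> \<le> d (Inr i) (Inl X) + d (Inl X) (Inl (ys ! i))"
      using dist_agent_triangle i assms(3) \<open>ys ! i \<in> A\<close> by blast
    finally show "d (Inr i) (Inl W) \<le> d (Inr i) (Inl X) + d (Inl X) (Inl (ys ! i))" .
  qed
  also have "\<dots> = SC P d X + (\<Sum>y\<leftarrow>ys. d (Inl X) (Inl y))"
    using ys(1) by (simp add: SC_def sum.distrib sum_list_sum_nth atLeast0LessThan)
  finally show ?thesis unfolding W_def using ys(4) by simp
qed

lemma dist_restricted_top_le_twice:
  assumes "j < length P" "B \<subseteq> A" "B \<noteq> {}" "X \<in> A" "Z \<in> B"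
  shows "d (Inl X) (Inl (hd (filter (\<lambda>x. x \<in> B) (P ! j))))
    \<le> 2 * d (Inr j) (Inl X) + of_bool (hd (P ! j) \<notin> B) * d (Inl X) (Inl Z)"
proof -
  define t where "t = hd (filter (\<lambda>x. x \<in> B) (P ! j))"
  have "t \<in> B" unfolding t_def using restricted_top_in assms(1-3) by blast
  then have "d (Inl X) (Inl t) \<le> d (Inr j) (Inl X) + d (Inr j) (Inl t)"
    using dist_alternatives_le assms by blast
  moreover have "d (Inr j) (Inl t) \<le> d (Inr j) (Inl X) + of_bool (hd (P ! j) \<notin> B) * d (Inl X) (Inl Z)"
  proof (cases "hd (P ! j) \<in> B")
    case True
    then show ?thesis
      unfolding t_def using restricted_top_eq_top dist_top_le assms(1,4) by simp
  next
    case False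
    have "d (Inr j) (Inl t) \<le> d (Inr j) (Inl Z)"
      unfolding t_def using dist_restricted_top_le assms by blast
    also have "\<dots> \<le> d (Inr j) (Inl X) + d (Inl X) (Inl Z)"
      using dist_agent_triangle assms by blast
    finally show ?thesis using False by simp
  qed
  ultimately show ?thesis unfolding t_def by simp
qed

lemma SC_plurality_veto_restrict_le_pruned_tops:
  assumes "B \<subseteq> A" "B \<noteq> {}" "X \<in> A" "Z \<in> B"
  shows "SC P d (plurality_veto B (restrict_profile B P))
    \<le> 3 * SC P d X + (\<Sum>j<length P. of_bool (hd (P ! j) \<notin> B)) * d (Inl X) (Inl Z)"
proof -
  have "(\<Sum>j<length P. d (Inl X) (Inl (hd (filter (\<lambda>x. x \<in> B) (P ! j)))))
      \<le> (\<Sum>j<length P. 2 * d (Inr j) (Inl X) + of_bool (hd (P ! j) \<notin> B) * d (Inl X) (Inl Z))"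
    using dist_restricted_top_le_twice assms by (intro sum_mono) blast
  also have "\<dots> = 2 * SC P d X + (\<Sum>j<length P. of_bool (hd (P ! j) \<notin> B)) * d (Inl X) (Inl Z)"
    by (simp add: SC_def sum.distrib sum_distrib_left sum_distrib_right)
  finally show ?thesis using SC_plurality_veto_restrict_le[OF assms(1-3)] by simp
qed

lemma unpruned_tops_mult_nearest_dist_le:
  assumes "B \<subseteq> A" "B \<noteq> {}" "X \<in> A" "Z \<in> B"
    and nearest: "\<forall>Y\<in>B. d (Inl X) (Inl Z) \<le> d (Inl X) (Inl Y)"
  shows "(real (length P) - (\<Sum>j<length P. of_bool (hd (P ! j) \<notin> B))) * d (Inl X) (Inl Z)
    \<le> 2 * SC P d X"
proof -
  have "of_bool (hd (P ! j) \<in> B) * d (Inl X) (Inl Z) \<le> 2 * d (Inr j) (Inl X)"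
    if j: "j < length P" for j
  proof (cases "hd (P ! j) \<in> B")
    case True
    have "d (Inl X) (Inl Z) \<le> d (Inl X) (Inl (hd (filter (\<lambda>x. x \<in> B) (P ! j))))"
      using nearest restricted_top_in[OF j assms(1,2)] by blast
    also have "\<dots> \<le> 2 * d (Inr j) (Inl X)"
      using dist_restricted_top_le_twice[OF j assms(1-4)] True by simp
    finally show ?thesis using True by simp
  qed (use dist_agent_nonneg j assms(3) in auto)
  then have "(\<Sum>j<length P. of_bool (hd (P ! j) \<in> B) * d (Inl X) (Inl Z))
      \<le> (\<Sum>j<length P. 2 * d (Inr j) (Inl X))"
    by (intro sum_mono) simp
  moreover have "of_bool (hd (P ! j) \<in> B) = 1 - (of_bool (hd (P ! j) \<notin> B) :: real)" for j
    by simp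
  ultimately show ?thesis
    by (simp add: SC_def sum_distrib_left left_diff_distrib sum_subtractf sum_distrib_right)
qed

lemma SC_pruned_plurality_veto_le:
  assumes "0 \<le> \<epsilon>" "X \<in> A"
  shows "SC P d (pruned_plurality_veto \<epsilon> A P) \<le> (3 + \<epsilon> / 3) * SC P d X"
proof -
  define A' where "A' = pruned_set \<epsilon> A P"
  have A'A: "A' \<subseteq> A" by (auto simp: A'_def pruned_set_def)
  have A'ne: "A' \<noteq> {}" unfolding A'_def using pruned_set_nonempty assms(1) .
  have "finite A'" using finite_alternatives A'A finite_subset by blast
  define Z where "Z = arg_min_on (\<lambda>Y. d (Inl X) (Inl Y)) A'"
  have Z: "Z \<in> A'" "\<forall>Y\<in>A'. d (Inl X) (Inl Z) \<le> d (Inl X) (Inl Y)"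
    unfolding Z_def using arg_min_if_finite[OF \<open>finite A'\<close> A'ne, of "\<lambda>Y. d (Inl X) (Inl Y)"]
    by (auto simp: not_less)
  define \<delta> where "\<delta> = d (Inl X) (Inl Z)"
  define n where "n = real (length P)"
  define k :: real where "k = (\<Sum>j<length P. of_bool (hd (P ! j) \<notin> A'))"
  have "0 \<le> \<delta>" unfolding \<delta>_def using dist_alternatives_nonneg assms(2) Z(1) A'A by blast
  have upper: "SC P d (pruned_plurality_veto \<epsilon> A P) \<le> 3 * SC P d X + k * \<delta>"
    using SC_plurality_veto_restrict_le_pruned_tops[OF A'A A'ne assms(2) Z(1)]
    unfolding pruned_plurality_veto_eq k_def \<delta>_def A'_def .
  have lower: "(n - k) * \<delta> \<le> 2 * SC P d X"
    using unpruned_tops_mult_nearest_dist_le[OF A'A A'ne assms(2) Z] unfolding n_def k_def \<delta>_def .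
  have "(6 + \<epsilon>) * k \<le> \<epsilon> * n"
    unfolding k_def n_def A'_def using sum_pruned_tops_le assms(1) .
  then have "6 * (k * \<delta>) \<le> \<epsilon> * ((n - k) * \<delta>)"
    using \<open>0 \<le> \<delta>\<close> mult_right_mono[of "6 * k" "\<epsilon> * (n - k)" \<delta>] by (simp add: algebra_simps)
  also have "\<dots> \<le> \<epsilon> * (2 * SC P d X)"
    using lower assms(1) by (rule mult_left_mono)
  finally have "k * \<delta> \<le> \<epsilon> / 3 * SC P d X" by (simp add: field_simps mult_ac)
  moreover have "(3 + \<epsilon> / 3) * SC P d X = 3 * SC P d X + \<epsilon> / 3 * SC P d X"
    by (rule distrib_right)
  ultimately show ?thesis using upper by linarith
qed

end

locale utility_profile = profile +
  fixes u :: "nat \<Rightarrow> 'a \<Rightarrow> real"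
  assumes consistent: "util_consistent A P u"
begin

lemma utility_nonneg: "i < length P \<Longrightarrow> X \<in> A \<Longrightarrow> 0 \<le> u i X"
  and utility_sum: "i < length P \<Longrightarrow> (\<Sum>X\<in>A. u i X) = 1"
  using consistent by (auto simp: util_consistent_def)

lemma utility_le_one: "i < length P \<Longrightarrow> X \<in> A \<Longrightarrow> u i X \<le> 1"
  using member_le_sum[of X A "u i"] finite_alternatives utility_nonneg utility_sum by simp

lemma utility_top_ge: "i < length P \<Longrightarrow> 1 \<le> real (card A) * u i (hd (P ! i))"
proof -
  assume i: "i < length P"
  have "u i Y \<le> u i (hd (P ! i))" if "Y \<in> A" for Y
  proof (cases "Y = hd (P ! i)")
    case False
    then have "ranked_above (P ! i) (hd (P ! i)) Y"
      using that i ranking_nonempty set_ranking by (intro ranked_above_hd) auto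
    then show ?thesis
      using consistent i that top_in by (auto simp: util_consistent_def prefers_iff_ranked_above)
  qed simp
  then have "(\<Sum>Y\<in>A. u i Y) \<le> (\<Sum>Y\<in>A. u i (hd (P ! i)))" by (rule sum_mono)
  then show ?thesis using utility_sum[OF i] by simp
qed

lemma SW_le_length: "X \<in> A \<Longrightarrow> SW P u X \<le> real (length P)"
  unfolding SW_def using utility_le_one sum_mono[of "{..<length P}" "\<lambda>i. u i X" "\<lambda>_. 1"] by simp

lemma plu_le_SW: "X \<in> A \<Longrightarrow> real (plu X P) \<le> real (card A) * SW P u X"
proof -
  assume X: "X \<in> A"
  have "real (plu X P) = (\<Sum>Y\<in>A. real (plu Y P) * of_bool (Y = X))"
    using X finite_alternatives by (simp add: of_bool_def if_distrib sum.delta' cong: if_cong)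
  also have "\<dots> = (\<Sum>j<length P. of_bool (hd (P ! j) = X))" by (rule sum_plu_mult)
  also have "\<dots> \<le> (\<Sum>j<length P. real (card A) * u j X)"
    using utility_top_ge utility_nonneg X by (intro sum_mono) auto
  also have "\<dots> = real (card A) * SW P u X" by (simp add: SW_def sum_distrib_left)
  finally show ?thesis .
qed

lemma SW_le_pruned_plurality_veto:
  assumes "0 < \<epsilon>" "X \<in> A"
  shows "SW P u X \<le> (6 + \<epsilon>) * real (card A) ^ 2 / \<epsilon> * SW P u (pruned_plurality_veto \<epsilon> A P)"
proof -
  define W where "W = pruned_plurality_veto \<epsilon> A P"
  define m where "m = real (card A)"
  have "0 < m" unfolding m_def using finite_alternatives alternatives_nonempty by (simp add: card_gt_0_iff)
  have "W \<in> pruned_set \<epsilon> A P" unfolding W_def using pruned_plurality_veto_in assms(1) by simp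
  then have "\<epsilon> * real (length P) / ((6 + \<epsilon>) * m) \<le> m * SW P u W"
    using plu_le_SW unfolding pruned_set_def m_def by fastforce
  then have "\<epsilon> * real (length P) \<le> (6 + \<epsilon>) * m ^ 2 * SW P u W"
    using assms(1) \<open>0 < m\<close> by (simp add: divide_le_eq power2_eq_square mult_ac)
  then have "real (length P) \<le> (6 + \<epsilon>) * m ^ 2 / \<epsilon> * SW P u W"
    using assms(1) by (simp add: le_divide_eq mult_ac)
  then show ?thesis using SW_le_length[OF assms(2)] unfolding W_def m_def by linarith
qed

end

theorem mainTheorem3:
  fixes \<epsilon> :: real
  assumes "\<epsilon> > 0"
  shows "metric_distortion_at_most (pruned_plurality_veto \<epsilon> :: 'a set \<Rightarrow> 'a list list \<Rightarrow> 'a) (9 + \<epsilon>)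
       \<and> util_distortion_at_most (pruned_plurality_veto \<epsilon> :: 'a set \<Rightarrow> 'a list list \<Rightarrow> 'a)
           (\<lambda>m. (6 + \<epsilon>) * real m ^ 2 / \<epsilon>)"
  unfolding metric_distortion_at_most_def util_distortion_at_most_def
proof (intro conjI allI impI ballI)
  fix A :: "'a set" and P d X
  assume "valid_profile A P" "metric_consistent A P d" "X \<in> A"
  then interpret metric_profile A P d by unfold_locales
  have "SC P d (pruned_plurality_veto \<epsilon> A P) \<le> (3 + \<epsilon> / 3) * SC P d X"
    using SC_pruned_plurality_veto_le assms \<open>X \<in> A\<close> by simp
  also have "\<dots> \<le> (9 + \<epsilon>) * SC P d X"
    using SC_nonneg[OF \<open>X \<in> A\<close>] assms by (intro mult_right_mono) auto
  finally show "SC P d (pruned_plurality_veto \<epsilon> A P) \<le> (9 + \<epsilon>) * SC P d X" .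
next
  fix A :: "'a set" and P u X
  assume "valid_profile A P" "util_consistent A P u" "X \<in> A"
  then interpret utility_profile A P u by unfold_locales
  show "SW P u X \<le> (6 + \<epsilon>) * real (card A) ^ 2 / \<epsilon> * SW P u (pruned_plurality_veto \<epsilon> A P)"
    using SW_le_pruned_plurality_veto assms \<open>X \<in> A\<close> by simp
qed

end
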